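(* (i) A point $(F_1,\dots,F_4,\Phi)\in\mathrm{QPH}(E)$ with $\Phi\ne0$ and $\det\Phi=0$ is not $\beta$-stable for any $\beta\in[0,1)^4$ if and only if $$-\bigl|\{1,2,3,4\}\setminus I_{L(\Phi)}\bigr|\ \ge\ \deg E-2\deg L(\Phi).$$ (ii) A point $(F_1,\dots,F_4,0)$ is not $\beta$-stable for any $\beta\in[0,1)^4$ if and only if there are line subbundles $L,L'\subset E$ with $L\cong\mathcal O(m_1)$, $L'\cong\mathcal O(m_2)$ such that $I_L\cup I_{L'}=\{1,2,3,4\}$.
   Context: Fix $z_1\in\mathbb{CP}^1\setminus\{0,1,\infty\}$, set $z_2=0$, $z_3=1$, $z_4=\infty$, $D=z_1+\dots+z_4$. Let $E\to\mathbb{CP}^1$ be a rank 2 holomorphic bundle of degree $d$, $E\cong\mathcal O(m_1)\oplus\mathcal O(m_2)$, $m_1\ge m_2$. $\mathrm{QPH}(E)$ is the space of tuples $(F_1,\dots,F_4,\Phi)$ where $F_i\subset E|_{z_i}$ are lines and $\Phi\in H^0(\mathrm{End}(E)\otimes K_{\mathbb{CP}^1}(D))$ has nilpotent residues with $F_i\subset\ker\mathrm{Res}_{z_i}\Phi$. A nonzero nilpotent $\Phi$ preserves a unique line subbundle $L(\Phi)$ (saturation of $\ker\Phi$). For a line subbundle $L$, $I_L=\{i:L|_{z_i}=F_i\}$. For $\beta\in[0,1)^4$, $\beta_I=\sum_{i\in I}\beta_i-\sum_{j\notin I}\beta_j$, and $(F,\Phi)$ is $\beta$-stable if $\beta_{I_L}<d-2\deg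 L$ for every $\Phi$-invariant line subbundle $L\subset E$ (every line subbundle if $\Phi=0$). *)

theory Defs
  imports "HOL-Analysis.Analysis" "HOL-Computational_Algebra.Polynomial"
begin

text \<open>
Points of CP^1 are \<open>complex option\<close> (\<open>None\<close> = infinity);
the marked points are z_1 = z1, z_2 = 0, z_3 = 1, z_4 = infinity.
E = O(m1) + O(m2) is trivialised over C by the frame (e1,e2) and over
CP^1 minus 0 by (f1,f2) with f_k = z^(m_k) e_k; fibres of E are \<open>complex^2\<close>
in these frames.  A global section of O(n) is a polynomial of degree \<le> n,
whose value at infinity (in the f-frame) is its coefficient of z^n.
\<close>

definition pt :: "complex \<Rightarrow> nat \<Rightarrow> complex option" where
  "pt z1 i = (if i = 1 then Some z1 else if i = 2 then Some 0
              else if i = 3 then Some 1 else None)"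

definition mdeg :: "int \<Rightarrow> int \<Rightarrow> 2 \<Rightarrow> int" where
  "mdeg m1 m2 i = (if i = 1 then m1 else m2)"

definition icoeff :: "complex poly \<Rightarrow> int \<Rightarrow> complex" where
  "icoeff p j = (if j < 0 then 0 else coeff p (nat j))"

text \<open>\<open>deg_le p n\<close>: p is a global section of O(n) (n may be negative, then p = 0).\<close>
definition deg_le :: "complex poly \<Rightarrow> int \<Rightarrow> bool" where
  "deg_le p n \<longleftrightarrow> p = 0 \<or> int (degree p) \<le> n"

definition cline :: "complex^2 \<Rightarrow> (complex^2) set" where
  "cline v = range (\<lambda>c. c *s v)"

definition is_line :: "(complex^2) set \<Rightarrow> bool" where
  "is_line S \<longleftrightarrow> (\<exists>v. v \<noteq> 0 \<and> S = cline v)"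

text \<open>A line subbundle of degree k is the image of a nowhere vanishing bundle map
O(k) \<rightarrow> E, i.e. a pair s = (s1,s2) of sections of O(m1-k), O(m2-k) without
common zero on CP^1.  \<open>sub_vec\<close> is the value of s at a point (a spanning
vector of the fibre of the subbundle there).\<close>
definition sub_vec :: "int \<Rightarrow> int \<Rightarrow> int \<Rightarrow> (complex poly^2) \<Rightarrow> complex option \<Rightarrow> complex^2" where
  "sub_vec m1 m2 k s x = (case x of
      Some z \<Rightarrow> (\<chi> i. poly (s $ i) z)
    | None \<Rightarrow> (\<chi> i. icoeff (s $ i) (mdeg m1 m2 i - k)))"

definition line_subbundle :: "int \<Rightarrow> int \<Rightarrow> int \<Rightarrow> (complex poly^2) \<Rightarrow> bool" where
  "line_subbundle m1 m2 k s \<longleftrightarrow>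
     (\<forall>i. deg_le (s $ i) (mdeg m1 m2 i - k)) \<and> (\<forall>x. sub_vec m1 m2 k s x \<noteq> 0)"

definition sub_fibre :: "complex \<Rightarrow> int \<Rightarrow> int \<Rightarrow> int \<Rightarrow> (complex poly^2) \<Rightarrow> nat \<Rightarrow> (complex^2) set" where
  "sub_fibre z1 m1 m2 k s i = cline (sub_vec m1 m2 k s (pt z1 i))"

definition IL :: "complex \<Rightarrow> int \<Rightarrow> int \<Rightarrow> (nat \<Rightarrow> (complex^2) set) \<Rightarrow> int \<Rightarrow> (complex poly^2) \<Rightarrow> nat set" where
  "IL z1 m1 m2 F k s = {i \<in> {1..4}. sub_fibre z1 m1 m2 k s i = F i}"

text \<open>Higgs fields: \<Phi> = A(z) \<otimes> dz/(z(z-1)(z-z1)), where A$i$j is a section of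
Hom(O(m_j),O(m_i)) \<otimes> K(D) = O(m_i - m_j + 2).\<close>
definition higgs :: "int \<Rightarrow> int \<Rightarrow> (complex poly^2^2) \<Rightarrow> bool" where
  "higgs m1 m2 A \<longleftrightarrow> (\<forall>i j. deg_le (A $ i $ j) (mdeg m1 m2 i - mdeg m1 m2 j + 2))"

definition denom :: "complex \<Rightarrow> complex poly" where
  "denom z1 = [:0, 1:] * [:-1, 1:] * [:-z1, 1:]"

text \<open>Residue of \<Phi> at a point (finite: A(z)/q'(z); at infinity: minus the
top coefficients, in the f-frame).\<close>
definition res :: "complex \<Rightarrow> int \<Rightarrow> int \<Rightarrow> (complex poly^2^2) \<Rightarrow> complex option \<Rightarrow> complex^2^2" where
  "res z1 m1 m2 A x = (case x of
      Some z \<Rightarrow> (\<chi> i j. poly (A $ i $ j) z / poly (pderiv (denom z1)) z)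
    | None \<Rightarrow> (\<chi> i j. - icoeff (A $ i $ j) (mdeg m1 m2 i - mdeg m1 m2 j + 2)))"

definition QPH :: "complex \<Rightarrow> int \<Rightarrow> int \<Rightarrow> (nat \<Rightarrow> (complex^2) set) \<Rightarrow> (complex poly^2^2) \<Rightarrow> bool" where
  "QPH z1 m1 m2 F A \<longleftrightarrow> higgs m1 m2 A \<and>
     (\<forall>i\<in>{1..4}. is_line (F i) \<and>
        res z1 m1 m2 A (pt z1 i) ** res z1 m1 m2 A (pt z1 i) = 0 \<and>
        (\<forall>v\<in>F i. res z1 m1 m2 A (pt z1 i) *v v = 0))"

definition invariant :: "(complex poly^2^2) \<Rightarrow> (complex poly^2) \<Rightarrow> bool" where
  "invariant A s \<longleftrightarrow> (A *v s) $ 1 * s $ 2 = (A *v s) $ 2 * s $ 1"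

definition beta_ok :: "(nat \<Rightarrow> real) \<Rightarrow> bool" where
  "beta_ok \<beta> \<longleftrightarrow> (\<forall>i\<in>{1..4}. 0 \<le> \<beta> i \<and> \<beta> i < 1)"

definition betaI :: "(nat \<Rightarrow> real) \<Rightarrow> nat set \<Rightarrow> real" where
  "betaI \<beta> I = (\<Sum>i\<in>I. \<beta> i) - (\<Sum>j\<in>{1..4} - I. \<beta> j)"

definition stable :: "complex \<Rightarrow> int \<Rightarrow> int \<Rightarrow> (nat \<Rightarrow> real) \<Rightarrow> (nat \<Rightarrow> (complex^2) set) \<Rightarrow> (complex poly^2^2) \<Rightarrow> bool" where
  "stable z1 m1 m2 \<beta> F A \<longleftrightarrow>
     (\<forall>k s. line_subbundle m1 m2 k s \<and> invariant A s \<longrightarrow>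
        betaI \<beta> (IL z1 m1 m2 F k s) < real_of_int (m1 + m2 - 2 * k))"

end

(*
  (i) The residues of Phi are nilpotent, so tr Phi, a section of O(2), vanishes at z1, 0, 1
  and hence identically. With det Phi = 0 this gives Phi^2 = 0, so every Phi-invariant line
  subbundle lies in ker Phi, i.e. is L(Phi). Stability is therefore the single inequality
  beta_I < deg E - 2 deg L(Phi), and the infimum of beta_I over all weights is
  -|{1..4} - I|; it is not attained, but the right-hand side is an integer.

  (ii) If L = O(m1) and L' = O(m2) together meet all four flags, then
  beta_{I_L} + beta_{I_L'} >= 0 = (deg E - 2 m1) + (deg E - 2 m2), so one of the two stability
  inequalities fails. Conversely, for m1 = m2 the weights 1/(4 * multiplicity of F_i) give
  stability. For m1 > m2, interpolation shows that more than m1 - m2 of the flags are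
  transversal to O(m1), and equal weights on those, of total m1 - m2 + 1/2, give stability.
*)

theory Submission
  imports Defs "HOL-Computational_Algebra.Polynomial_Factorial"
    "HOL-Computational_Algebra.Field_as_Ring"
    "HOL-Computational_Algebra.Fundamental_Theorem_Algebra"
begin

lemma vec2_eq_iff: "(v::'a^2) = w \<longleftrightarrow> v$1 = w$1 \<and> v$2 = w$2"
  by (simp add: vec_eq_iff forall_2)

lemma matrix_vector_mult_2:
  "((A::'a::semiring_1^2^2) *v v)$i = A$i$1 * v$1 + A$i$2 * v$2"
  by (simp add: matrix_vector_mult_def sum_2)

lemma matrix_matrix_mult_2:
  "((A::'a::semiring_1^2^2) ** B)$i$j = A$i$1 * B$1$j + A$i$2 * B$2$j"
  by (simp add: matrix_matrix_mult_def sum_2)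

lemma mdeg_simps [simp]: "mdeg m1 m2 1 = m1" "mdeg m1 m2 2 = m2"
  by (simp_all add: mdeg_def)

lemma sub_vec_nth [simp]:
  "sub_vec m1 m2 k s (Some z) $ i = poly (s$i) z"
  "sub_vec m1 m2 k s None $ i = icoeff (s$i) (mdeg m1 m2 i - k)"
  by (simp_all add: sub_vec_def)

lemma IL_subset: "IL z1 m1 m2 F k s \<subseteq> {1..4}"
  by (auto simp: IL_def)

lemma card_diff_one_to_four_le: "card ({1..4::nat} - I) \<le> 4"
  by (metis Diff_subset card_atLeastAtMost card_mono diff_Suc_1 finite_atLeastAtMost)

lemma in_cline: "v \<in> cline v"
  unfolding cline_def by (metis rangeI vector_smult_lid)

lemma cline_scale:
  assumes "c \<noteq> 0"
  shows "cline (c *s v) = cline v"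
proof -
  have "d *s v = (d / c) *s (c *s v)" for d
    using assms by (simp add: vector_smult_assoc)
  then have "range (\<lambda>d. d *s v) \<subseteq> range (\<lambda>d. d *s (c *s v))"
    by blast
  moreover have "range (\<lambda>d. d *s (c *s v)) \<subseteq> range (\<lambda>d. d *s v)"
    by (auto simp: vector_smult_assoc)
  ultimately show ?thesis
    unfolding cline_def by blast
qed

lemma cline_eq_iff:
  fixes v w :: "complex^2"
  assumes "v \<noteq> 0" "w \<noteq> 0"
  shows "cline v = cline w \<longleftrightarrow> v$1 * w$2 = v$2 * w$1"
proof
  assume "cline v = cline w"
  then obtain c where "v = c *s w"
    using in_cline[of v] unfolding cline_def by auto
  then show "v$1 * w$2 = v$2 * w$1" by simp
next
  assume par: "v$1 * w$2 = v$2 * w$1"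
  obtain i where wi: "w$i \<noteq> 0"
    using assms(2) by (metis vec_eq_iff zero_index)
  have "v$j * w$i = v$i * w$j" for j
    using par exhaust_2[of i] exhaust_2[of j] by (auto simp: algebra_simps)
  then have v: "v = (v$i / w$i) *s w"
    using wi by (simp add: vec_eq_iff field_simps)
  with assms(1) have "v$i / w$i \<noteq> 0"
    by (metis vector_smult_lzero)
  with v show "cline v = cline w"
    using cline_scale by metis
qed

lemma cline_eq_cline_axis_iff: "w \<noteq> 0 \<Longrightarrow> cline w = cline (axis 1 1) \<longleftrightarrow> w$2 = 0"
  by (subst cline_eq_iff) (auto simp: axis_def vec_eq_iff)

lemma trace_eq_0_if_square_eq_0:
  fixes R :: "'a::idom^2^2"
  assumes "R ** R = 0"
  shows "R$1$1 + R$2$2 = 0"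
proof (rule ccontr)
  assume tr: "R$1$1 + R$2$2 \<noteq> 0"
  have entry: "(R ** R)$i$j = 0" for i j
    using assms by simp
  have "R$1$2 * (R$1$1 + R$2$2) = 0" "R$2$1 * (R$1$1 + R$2$2) = 0"
    using entry[of 1 2] entry[of 2 1] by (simp_all add: matrix_matrix_mult_2 algebra_simps)
  with tr have "R$1$2 = 0" "R$2$1 = 0"
    by simp_all
  with entry[of 1 1] entry[of 2 2] have "R$1$1 = 0" "R$2$2 = 0"
    by (simp_all add: matrix_matrix_mult_2)
  with tr show False
    by simp
qed

lemma square_eq_0_if_trace_det_eq_0:
  fixes A :: "'a::comm_ring_1^2^2"
  assumes "A$1$1 + A$2$2 = 0" "det A = 0"
  shows "A ** A = 0"
proof -
  have A22: "A$2$2 = - A$1$1"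
    using assms(1) by (simp add: eq_neg_iff_add_eq_0 add.commute)
  have "det A = - (A$1$1 * A$1$1 + A$1$2 * A$2$1)"
    by (simp add: det_2 A22 algebra_simps)
  with assms(2) have "A$1$2 * A$2$1 = - (A$1$1 * A$1$1)"
    by (metis add.commute eq_neg_iff_add_eq_0 neg_equal_0_iff_equal)
  then show ?thesis
    by (simp add: vec_eq_iff forall_2 matrix_matrix_mult_2 A22 algebra_simps)
qed

text \<open>If \<open>v = A s\<close> is parallel to \<open>s\<close>, then \<open>s\<^sub>i (A v)\<^sub>i = v\<^sub>i\<^sup>2\<close>, while \<open>A v = A\<^sup>2 s = 0\<close>.\<close>

lemma kernel_if_square_eq_0_parallel:
  fixes A :: "'a::idom^2^2"
  assumes sq: "A ** A = 0" and par: "(A *v s)$1 * s$2 = (A *v s)$2 * s$1"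
  shows "A *v s = 0"
proof -
  define v where "v = A *v s"
  have Av: "A *v v = 0"
    using sq by (simp add: v_def matrix_vector_mul_assoc)
  have par_v: "v$1 * s$2 = v$2 * s$1"
    using par by (simp add: v_def)
  have "s$1 * (A *v v)$1 = A$1$1 * s$1 * v$1 + A$1$2 * (v$2 * s$1)"
    by (simp add: matrix_vector_mult_2 algebra_simps)
  also have "\<dots> = v$1 * v$1"
    unfolding par_v [symmetric] by (simp add: v_def matrix_vector_mult_2 algebra_simps)
  finally have "v$1 * v$1 = 0"
    using Av by simp
  have "s$2 * (A *v v)$2 = A$2$1 * (v$1 * s$2) + A$2$2 * s$2 * v$2"
    by (simp add: matrix_vector_mult_2 algebra_simps)
  also have "\<dots> = v$2 * v$2"
    unfolding par_v by (simp add: v_def matrix_vector_mult_2 algebra_simps)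
  finally have "v$2 * v$2 = 0"
    using Av by simp
  with \<open>v$1 * v$1 = 0\<close> show ?thesis
    by (simp add: v_def [symmetric] vec2_eq_iff)
qed

lemma kernel_vectors_parallel:
  fixes A :: "'a::idom^2^2"
  assumes "A \<noteq> 0" "A *v s = 0" "A *v t = 0"
  shows "s$1 * t$2 = s$2 * t$1"
proof -
  obtain i j where "A$i$j \<noteq> 0"
    using assms(1) by (metis vec_eq_iff zero_index)
  then have row: "A$i$1 \<noteq> 0 \<or> A$i$2 \<noteq> 0"
    using exhaust_2[of j] by auto
  have "(A *v s)$i = 0" "(A *v t)$i = 0"
    using assms(2,3) by simp_all
  then have s: "A$i$1 * s$1 = - (A$i$2 * s$2)" and t: "A$i$1 * t$1 = - (A$i$2 * t$2)"
    by (simp_all add: matrix_vector_mult_2 eq_neg_iff_add_eq_0)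
  have "A$i$1 * (s$1 * t$2 - s$2 * t$1) = (A$i$1 * s$1) * t$2 - s$2 * (A$i$1 * t$1)"
    by (simp add: algebra_simps)
  also have "\<dots> = 0"
    unfolding s t by (simp add: algebra_simps)
  finally have "A$i$1 * (s$1 * t$2 - s$2 * t$1) = 0" .
  have s': "A$i$2 * s$2 = - (A$i$1 * s$1)" and t': "A$i$2 * t$2 = - (A$i$1 * t$1)"
    using s t by simp_all
  have "A$i$2 * (s$1 * t$2 - s$2 * t$1) = s$1 * (A$i$2 * t$2) - (A$i$2 * s$2) * t$1"
    by (simp add: algebra_simps)
  also have "\<dots> = 0"
    unfolding s' t' by (simp add: algebra_simps)
  finally have "A$i$2 * (s$1 * t$2 - s$2 * t$1) = 0" .
  with row \<open>A$i$1 * (s$1 * t$2 - s$2 * t$1) = 0\<close> show ?thesis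
    by auto
qed

lemma interpolating_poly_exists:
  fixes x :: "'i \<Rightarrow> 'a::field" and y :: "'i \<Rightarrow> 'a"
  assumes "finite I" "inj_on x I"
  shows "\<exists>p. (\<forall>i\<in>I. poly p (x i) = y i) \<and> (\<forall>n\<ge>card I. coeff p n = 0)"
  using assms
proof (induction I rule: finite_induct)
  case empty
  show ?case by (intro exI[of _ 0]) simp
next
  case (insert j I)
  obtain p where p: "\<forall>i\<in>I. poly p (x i) = y i" "\<forall>n\<ge>card I. coeff p n = 0"
    using insert by auto
  define q where "q = (\<Prod>i\<in>I. [:- x i, 1:])"
  have q_root: "poly q (x i) = 0" if "i \<in> I" for i
    using insert(1) that by (auto simp: q_def poly_prod)
  have "x j \<noteq> x i" if "i \<in> I" for i
    using insert that by (auto simp: inj_on_def)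
  then have q_j: "poly q (x j) \<noteq> 0"
    using insert(1) by (auto simp: q_def poly_prod)
  have "degree q \<le> card I"
    using degree_prod_sum_le[OF insert(1), of "\<lambda>i. [:- x i, 1:]"] by (simp add: q_def)
  then have q_coeff: "coeff q n = 0" if "n \<ge> card (insert j I)" for n
    using insert that by (intro coeff_eq_0) simp
  define c where "c = (y j - poly p (x j)) / poly q (x j)"
  show ?case
  proof (intro exI[of _ "p + smult c q"] conjI ballI allI impI)
    fix i assume "i \<in> insert j I"
    then show "poly (p + smult c q) (x i) = y i"
      using p(1) q_root q_j by (auto simp: c_def)
  next
    fix n assume "n \<ge> card (insert j I)"
    then show "coeff (p + smult c q) n = 0"
      using p(2) q_coeff insert by simp
  qed
qed

lemma const_if_deg_le_0: "deg_le p 0 \<Longrightarrow> p = [:coeff p 0:]"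
  unfolding deg_le_def using degree_0_id[of p] by auto

subsection \<open>Line subbundles\<close>

lemma line_subbundle_nonzero: "line_subbundle m1 m2 k s \<Longrightarrow> s \<noteq> 0"
  unfolding line_subbundle_def by (metis sub_vec_nth(1) vec_eq_iff zero_index poly_0)

lemma line_subbundle_coprime:
  assumes L: "line_subbundle m1 m2 k s"
  shows "coprime (s$1) (s$2)"
proof (rule ccontr)
  assume "\<not> coprime (s$1) (s$2)"
  then have "\<not> is_unit (gcd (s$1) (s$2))"
    by (simp add: coprime_iff_gcd_eq_1 is_unit_gcd)
  moreover have "gcd (s$1) (s$2) \<noteq> 0"
    using line_subbundle_nonzero[OF L] by (auto simp: vec2_eq_iff)
  ultimately have "degree (gcd (s$1) (s$2)) \<noteq> 0"
    using is_unit_iff_degree by blast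
  then obtain z where "poly (gcd (s$1) (s$2)) z = 0"
    by (metis fundamental_theorem_of_algebra constant_degree)
  then have "poly (s$1) z = 0" "poly (s$2) z = 0"
    by (meson dvd_trans gcd_dvd1 gcd_dvd2 poly_eq_0_iff_dvd)+
  then have "sub_vec m1 m2 k s (Some z) = 0"
    by (simp add: vec2_eq_iff)
  with L show False
    by (simp add: line_subbundle_def)
qed

lemma line_subbundle_degree_le:
  "line_subbundle m1 m2 k s \<Longrightarrow> s$i \<noteq> 0 \<Longrightarrow> int (degree (s$i)) \<le> mdeg m1 m2 i - k"
  by (auto simp: line_subbundle_def deg_le_def)

lemma line_subbundle_degree_attained:
  assumes L: "line_subbundle m1 m2 k s"
  obtains i where "s$i \<noteq> 0" "int (degree (s$i)) = mdeg m1 m2 i - k"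
proof -
  obtain i where "icoeff (s$i) (mdeg m1 m2 i - k) \<noteq> 0"
    using L unfolding line_subbundle_def by (metis sub_vec_nth(2) vec_eq_iff zero_index)
  then have "mdeg m1 m2 i - k \<ge> 0" "coeff (s$i) (nat (mdeg m1 m2 i - k)) \<noteq> 0"
    by (auto simp: icoeff_def split: if_splits)
  moreover from this have "s$i \<noteq> 0" "nat (mdeg m1 m2 i - k) \<le> degree (s$i)"
    using le_degree by auto
  ultimately show ?thesis
    using that line_subbundle_degree_le[OF L] by fastforce
qed

lemma line_subbundle_degree_bound:
  "line_subbundle m1 m2 k s \<Longrightarrow> s$i \<noteq> 0 \<Longrightarrow> k \<le> mdeg m1 m2 i"
  using line_subbundle_degree_le[of m1 m2 k s i] by linarith

lemma coprime_parallel_smult_aux: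
  fixes a1 a2 b1 b2 :: "'a::field_gcd poly"
  assumes a: "coprime a1 a2" and b: "coprime b1 b2" and "a1 \<noteq> 0" and par: "a1 * b2 = a2 * b1"
  shows "\<exists>c. c \<noteq> 0 \<and> b1 = smult c a1 \<and> b2 = smult c a2"
proof -
  have "a1 dvd a2 * b1"
    by (simp flip: par)
  with a have "a1 dvd b1"
    by (simp add: coprime_dvd_mult_right_iff)
  then obtain q where q: "b1 = a1 * q" ..
  have "b1 dvd b2 * a1"
    by (simp add: par mult.commute)
  with b have "b1 dvd a1"
    by (simp add: coprime_dvd_mult_right_iff)
  then obtain r where r: "a1 = b1 * r" ..
  have "a1 * (q * r) = a1 * 1"
    using q r by (simp add: mult.assoc [symmetric])
  with \<open>a1 \<noteq> 0\<close> have "q dvd 1"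
    by (metis dvd_triv_left mult_left_cancel)
  then obtain c where "q = [:c:]" "c dvd 1"
    by (auto simp: is_unit_poly_iff)
  then have c: "q = [:c:]" "c \<noteq> 0"
    by auto
  have b1: "b1 = smult c a1"
    using q c by simp
  have "a1 * b2 = a1 * smult c a2"
    unfolding par b1 by (simp add: mult.commute)
  with \<open>a1 \<noteq> 0\<close> have "b2 = smult c a2"
    using mult_left_cancel by blast
  with b1 c show ?thesis
    by blast
qed

lemma coprime_parallel_smult:
  fixes s t :: "'a::field_gcd poly^2"
  assumes s: "coprime (s$1) (s$2)" and t: "coprime (t$1) (t$2)" and par: "s$1 * t$2 = s$2 * t$1"
  shows "\<exists>c. c \<noteq> 0 \<and> (\<forall>i. t$i = smult c (s$i))"
proof -
  have "\<exists>c. c \<noteq> 0 \<and> t$1 = smult c (s$1) \<and> t$2 = smult c (s$2)"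
  proof (cases "s$1 = 0")
    case True
    with s have "s$2 \<noteq> 0"
      by auto
    moreover have "coprime (s$2) (s$1)" "coprime (t$2) (t$1)" "s$2 * t$1 = s$1 * t$2"
      using s t par by (simp_all add: ac_simps)
    ultimately show ?thesis
      using coprime_parallel_smult_aux[of "s$2" "s$1" "t$2" "t$1"] by blast
  next
    case False
    then show ?thesis
      using coprime_parallel_smult_aux[OF s t False par] by blast
  qed
  then obtain c where "c \<noteq> 0" "t$1 = smult c (s$1)" "t$2 = smult c (s$2)"
    by blast
  then have "t$i = smult c (s$i)" for i
    using exhaust_2[of i] by auto
  with \<open>c \<noteq> 0\<close> show ?thesis
    by blast
qed

lemma sub_vec_smult:
  "(\<And>i. t$i = smult c (s$i)) \<Longrightarrow> sub_vec m1 m2 k t x = c *s sub_vec m1 m2 k s x"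
  by (cases x) (simp_all add: vec_eq_iff icoeff_def)

lemma parallel_line_subbundles:
  assumes L: "line_subbundle m1 m2 k s" and L': "line_subbundle m1 m2 k' t"
    and par: "s$1 * t$2 = s$2 * t$1"
  shows "k' = k" "IL z1 m1 m2 F k' t = IL z1 m1 m2 F k s"
proof -
  obtain c where c: "c \<noteq> 0" "\<And>i. t$i = smult c (s$i)"
    using coprime_parallel_smult[OF line_subbundle_coprime[OF L] line_subbundle_coprime[OF L'] par]
    by blast
  obtain i where i: "s$i \<noteq> 0" "int (degree (s$i)) = mdeg m1 m2 i - k"
    using line_subbundle_degree_attained[OF L] .
  obtain i' where i': "t$i' \<noteq> 0" "int (degree (t$i')) = mdeg m1 m2 i' - k'"
    using line_subbundle_degree_attained[OF L'] .
  have "int (degree (s$i)) \<le> mdeg m1 m2 i - k'"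
    using line_subbundle_degree_le[OF L', of i] i(1) c by simp
  moreover have "int (degree (t$i')) \<le> mdeg m1 m2 i' - k"
    using line_subbundle_degree_le[OF L, of i'] i'(1) c by simp
  ultimately show "k' = k"
    using i(2) i'(2) by linarith
  then show "IL z1 m1 m2 F k' t = IL z1 m1 m2 F k s"
    by (simp add: IL_def sub_fibre_def sub_vec_smult[OF c(2)] cline_scale[OF c(1)])
qed

definition const_section :: "complex^2 \<Rightarrow> complex poly^2" where
  "const_section w = (\<chi> i. [:w$i:])"

lemma sub_vec_const_section:
  assumes "\<And>i. w$i \<noteq> 0 \<Longrightarrow> mdeg m1 m2 i = k"
  shows "sub_vec m1 m2 k (const_section w) x = w"
proof -
  have "icoeff [:w$i:] (mdeg m1 m2 i - k) = w$i" for i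
    using assms[of i] by (cases "w$i = 0") (simp_all add: icoeff_def)
  then show ?thesis
    by (cases x) (simp_all add: vec_eq_iff const_section_def)
qed

lemma line_subbundle_const_section:
  assumes "w \<noteq> 0" "\<And>i. w$i \<noteq> 0 \<Longrightarrow> mdeg m1 m2 i = k"
  shows "line_subbundle m1 m2 k (const_section w)"
proof -
  have "deg_le (const_section w $ i) (mdeg m1 m2 i - k)" for i
    using assms(2)[of i] by (cases "w$i = 0") (simp_all add: deg_le_def const_section_def)
  then show ?thesis
    using assms by (simp add: line_subbundle_def sub_vec_const_section)
qed

lemma IL_const_section:
  "(\<And>i. w$i \<noteq> 0 \<Longrightarrow> mdeg m1 m2 i = k) \<Longrightarrow>
    IL z1 m1 m2 F k (const_section w) = {i \<in> {1..4}. cline w = F i}"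
  by (simp add: IL_def sub_fibre_def sub_vec_const_section)

lemma line_subbundle_balanced_eq_const_section:
  assumes "line_subbundle k k k s"
  shows "s = const_section (\<chi> i. coeff (s$i) 0)"
proof -
  have "deg_le (s$i) 0" for i
    using assms by (simp add: line_subbundle_def mdeg_def)
  then have "s$i = [:coeff (s$i) 0:]" for i
    by (rule const_if_deg_le_0)
  then show ?thesis
    by (simp add: vec_eq_iff const_section_def)
qed

subsection \<open>Higgs fields with vanishing determinant\<close>

lemma QPH_lines: "QPH z1 m1 m2 F A \<Longrightarrow> i \<in> {1..4} \<Longrightarrow> \<exists>v. v \<noteq> 0 \<and> F i = cline v"
  by (auto simp: QPH_def is_line_def)

lemma poly_pderiv_denom: "poly (pderiv (denom z1)) z = 3 * z\<^sup>2 - 2 * (1 + z1) * z + z1"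
  by (simp add: denom_def pderiv_mult pderiv_pCons algebra_simps power2_eq_square)

text \<open>The trace of \<open>\<Phi>\<close> is a section of \<open>O(2)\<close> whose values at the three finite marked
  points are traces of nilpotent residues, so it vanishes.\<close>

lemma QPH_trace_eq_0:
  assumes z: "z1 \<noteq> 0" "z1 \<noteq> 1" and Q: "QPH z1 m1 m2 F A"
  shows "A$1$1 + A$2$2 = 0"
proof -
  let ?T = "A$1$1 + A$2$2"
  have root: "poly ?T z = 0"
    if "i \<in> {1..4}" "pt z1 i = Some z" "poly (pderiv (denom z1)) z \<noteq> 0" for i z
  proof -
    have "res z1 m1 m2 A (pt z1 i) ** res z1 m1 m2 A (pt z1 i) = 0"
      using Q that(1) by (simp add: QPH_def)
    then have "res z1 m1 m2 A (Some z)$1$1 + res z1 m1 m2 A (Some z)$2$2 = 0"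
      using that(2) trace_eq_0_if_square_eq_0 by metis
    with that(3) show ?thesis
      by (simp add: res_def add_divide_distrib [symmetric])
  qed
  have "poly ?T z1 = 0"
    by (rule root[of 1]) (use z in \<open>auto simp: pt_def poly_pderiv_denom power2_eq_square algebra_simps\<close>)
  moreover have "poly ?T 0 = 0"
    by (rule root[of 2]) (use z in \<open>auto simp: pt_def poly_pderiv_denom\<close>)
  moreover have "poly ?T 1 = 0"
    by (rule root[of 3]) (use z in \<open>auto simp: pt_def poly_pderiv_denom\<close>)
  moreover have "deg_le (A$i$i) 2" for i
    using Q unfolding QPH_def higgs_def by (metis add.commute diff_self add_0)
  then have "degree (A$i$i) \<le> 2" for i
    unfolding deg_le_def by (metis degree_0 of_nat_le_iff of_nat_numeral zero_le)
  then have "degree ?T \<le> 2"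
    by (meson degree_add_le)
  moreover have "card {z1, 0, 1} = 3"
    using z by simp
  ultimately show ?thesis
    using poly_eqI_degree[of "{z1, 0, 1}" ?T 0] by auto
qed

lemma QPH_invariant_imp_kernel:
  assumes "z1 \<noteq> 0" "z1 \<noteq> 1" "QPH z1 m1 m2 F A" "det A = 0" "invariant A s"
  shows "A *v s = 0"
proof (rule kernel_if_square_eq_0_parallel)
  show "A ** A = 0"
    by (rule square_eq_0_if_trace_det_eq_0[OF QPH_trace_eq_0[OF assms(1-3)] assms(4)])
  show "(A *v s)$1 * s$2 = (A *v s)$2 * s$1"
    using assms(5) by (simp add: invariant_def)
qed

lemma stable_iff_kernel_subbundle:
  assumes z: "z1 \<noteq> 0" "z1 \<noteq> 1" and Q: "QPH z1 m1 m2 F A" and "A \<noteq> 0" "det A = 0"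
    and L: "line_subbundle m1 m2 k s" and "A *v s = 0"
  shows "stable z1 m1 m2 \<beta> F A \<longleftrightarrow> betaI \<beta> (IL z1 m1 m2 F k s) < real_of_int (m1 + m2 - 2 * k)"
proof -
  have "k' = k \<and> IL z1 m1 m2 F k' t = IL z1 m1 m2 F k s"
    if t: "line_subbundle m1 m2 k' t" "invariant A t" for k' t
  proof -
    have "A *v t = 0"
      using QPH_invariant_imp_kernel[OF z Q \<open>det A = 0\<close> t(2)] .
    then have "s$1 * t$2 = s$2 * t$1"
      by (rule kernel_vectors_parallel[OF \<open>A \<noteq> 0\<close> \<open>A *v s = 0\<close>])
    then show ?thesis
      using parallel_line_subbundles[OF L t(1)] by simp
  qed
  moreover have "invariant A s"
    using \<open>A *v s = 0\<close> by (simp add: invariant_def)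
  ultimately show ?thesis
    using L unfolding stable_def by (metis (no_types, lifting))
qed

subsection \<open>Parabolic weights\<close>

lemma betaI_eq:
  assumes "I \<subseteq> {1..4}"
  shows "betaI \<beta> I = 2 * sum \<beta> I - sum \<beta> {1..4}"
proof -
  have "sum \<beta> ({1..4} - I) = sum \<beta> {1..4} - sum \<beta> I"
    using assms by (simp add: sum_diff)
  then show ?thesis
    by (simp add: betaI_def)
qed

lemma betaI_ge_card:
  assumes "beta_ok \<beta>" "I \<subseteq> {1..4}"
  shows "- real (card ({1..4} - I)) \<le> betaI \<beta> I"
proof -
  have "0 \<le> sum \<beta> I"
    using assms by (intro sum_nonneg) (auto simp: beta_ok_def)
  moreover have "sum \<beta> ({1..4} - I) \<le> (\<Sum>j\<in>{1..4} - I. 1)"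
    using assms(1) by (intro sum_mono) (auto simp: beta_ok_def less_imp_le)
  ultimately show ?thesis
    by (simp add: betaI_def)
qed

lemma betaI_le_sum:
  assumes "beta_ok \<beta>" "I \<subseteq> {1..4}"
  shows "betaI \<beta> I \<le> sum \<beta> {1..4}"
proof -
  have "sum \<beta> I \<le> sum \<beta> {1..4}"
    using assms by (intro sum_mono2) (auto simp: beta_ok_def)
  then show ?thesis
    using betaI_eq[OF assms(2)] by simp
qed

lemma betaI_union_nonneg:
  assumes "beta_ok \<beta>" "I \<subseteq> {1..4}" "J \<subseteq> {1..4}" "I \<union> J = {1..4}"
  shows "0 \<le> betaI \<beta> I + betaI \<beta> J"
proof -
  have fin: "finite I" "finite J"
    using assms(2,3) finite_subset by auto
  have "0 \<le> sum \<beta> (I \<inter> J)"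
    using assms by (intro sum_nonneg) (auto simp: beta_ok_def)
  moreover have "sum \<beta> {1..4} = sum \<beta> I + sum \<beta> J - sum \<beta> (I \<inter> J)"
    using sum_Un[OF fin, of \<beta>] assms(4) by simp
  ultimately show ?thesis
    using betaI_eq[OF assms(2)] betaI_eq[OF assms(3)] by simp
qed

text \<open>The infimum \<open>-|{1..4} - I|\<close> of \<open>\<beta>\<^sub>I\<close> is not attained, but since the bound \<open>c\<close> is
  an integer, weights close to it suffice.\<close>

lemma ex_betaI_less_iff:
  assumes I: "I \<subseteq> {1..4}"
  shows "(\<exists>\<beta>. beta_ok \<beta> \<and> betaI \<beta> I < real_of_int c) \<longleftrightarrow> - real (card ({1..4} - I)) < real_of_int c"
proof
  assume "\<exists>\<beta>. beta_ok \<beta> \<and> betaI \<beta> I < real_of_int c"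
  then show "- real (card ({1..4} - I)) < real_of_int c"
    using betaI_ge_card[OF _ I] by fastforce
next
  assume "- real (card ({1..4} - I)) < real_of_int c"
  then have "- int (card ({1..4} - I)) < c"
    by (metis of_int_less_iff of_int_minus of_int_of_nat_eq)
  then have "real_of_int (1 - int (card ({1..4} - I))) \<le> real_of_int c"
    by (simp only: of_int_le_iff)
  then have c: "1 - real (card ({1..4} - I)) \<le> real_of_int c"
    by simp
  define \<beta> where "\<beta> i = (if i \<in> I then 0 else 7/8 :: real)" for i
  have "beta_ok \<beta>"
    by (simp add: beta_ok_def \<beta>_def)
  moreover have "betaI \<beta> I = - 7/8 * real (card ({1..4} - I))"
    by (simp add: betaI_def \<beta>_def)
  moreover have "card ({1..4::nat} - I) \<le> 4"
    by (rule card_diff_one_to_four_le)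
  ultimately show "\<exists>\<beta>. beta_ok \<beta> \<and> betaI \<beta> I < real_of_int c"
    using c by (intro exI[of _ \<beta>]) simp
qed

subsection \<open>The zero Higgs field\<close>

lemma stable_zero_iff:
  "stable z1 m1 m2 \<beta> F 0 \<longleftrightarrow>
    (\<forall>k s. line_subbundle m1 m2 k s \<longrightarrow> betaI \<beta> (IL z1 m1 m2 F k s) < real_of_int (m1 + m2 - 2 * k))"
  by (simp add: stable_def invariant_def)

definition subbundles_cover :: "complex \<Rightarrow> int \<Rightarrow> int \<Rightarrow> (nat \<Rightarrow> (complex^2) set) \<Rightarrow> bool" where
  "subbundles_cover z1 m1 m2 F \<longleftrightarrow> (\<exists>s s'. line_subbundle m1 m2 m1 s \<and> line_subbundle m1 m2 m2 s' \<and>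
     IL z1 m1 m2 F m1 s \<union> IL z1 m1 m2 F m2 s' = {1..4})"

lemma not_stable_if_subbundles_cover:
  assumes "subbundles_cover z1 m1 m2 F" and "beta_ok \<beta>"
  shows "\<not> stable z1 m1 m2 \<beta> F 0"
proof
  obtain s s' where L: "line_subbundle m1 m2 m1 s" and L': "line_subbundle m1 m2 m2 s'"
    and cover: "IL z1 m1 m2 F m1 s \<union> IL z1 m1 m2 F m2 s' = {1..4}"
    using assms(1) unfolding subbundles_cover_def by blast
  assume "stable z1 m1 m2 \<beta> F 0"
  then have "betaI \<beta> (IL z1 m1 m2 F m1 s) < real_of_int (m1 + m2 - 2 * m1)"
    and "betaI \<beta> (IL z1 m1 m2 F m2 s') < real_of_int (m1 + m2 - 2 * m2)"
    using L L' unfolding stable_zero_iff by blast+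
  moreover have "0 \<le> betaI \<beta> (IL z1 m1 m2 F m1 s) + betaI \<beta> (IL z1 m1 m2 F m2 s')"
    using betaI_union_nonneg[OF \<open>beta_ok \<beta>\<close> IL_subset IL_subset cover] .
  ultimately show False
    by simp
qed

text \<open>Each distinct value of \<open>f\<close> on \<open>{1..4}\<close> receives total weight \<open>1/4\<close>.\<close>

definition fibre_weight :: "(nat \<Rightarrow> 'a) \<Rightarrow> nat \<Rightarrow> real" where
  "fibre_weight f i = 1 / (4 * real (card {j \<in> {1..4}. f j = f i}))"

lemma card_fibre_pos: "i \<in> {1..4} \<Longrightarrow> 0 < card {j \<in> {1..4::nat}. f j = f i}"
  by (subst card_gt_0_iff) auto

lemma fibre_weight_bounds: "i \<in> {1..4} \<Longrightarrow> 0 < fibre_weight f i \<and> fibre_weight f i \<le> 1/4"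
  using card_fibre_pos[of i f] by (simp add: fibre_weight_def field_simps)

lemma beta_ok_fibre_weight: "beta_ok (fibre_weight f)"
  unfolding beta_ok_def
proof
  fix i :: nat assume "i \<in> {1..4}"
  from fibre_weight_bounds[OF this, of f] show "0 \<le> fibre_weight f i \<and> fibre_weight f i < 1"
    by simp
qed

lemma sum_fibre_weight_le: "sum (fibre_weight f) {1..4} \<le> 1"
proof -
  have "sum (fibre_weight f) {1..4} \<le> (\<Sum>i\<in>{1..4::nat}. 1/4)"
    using fibre_weight_bounds by (intro sum_mono) auto
  then show ?thesis
    by simp
qed

lemma sum_fibre_weight_fibre:
  assumes "a \<in> {1..4}"
  shows "sum (fibre_weight f) {j \<in> {1..4}. f j = f a} = 1/4"
proof -
  have "sum (fibre_weight f) {j \<in> {1..4}. f j = f a}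
      = (\<Sum>j\<in>{j \<in> {1..4}. f j = f a}. 1 / (4 * real (card {j \<in> {1..4}. f j = f a})))"
    by (intro sum.cong) (auto simp: fibre_weight_def)
  also have "\<dots> = 1/4"
    using assms by auto
  finally show ?thesis .
qed

text \<open>If no two values of \<open>f\<close> cover \<open>{1..4}\<close>, then the complement of any fibre contains
  two further fibres, of total weight \<open>1/2\<close>.\<close>

lemma betaI_fibre_weight_neg:
  assumes no_cover: "\<forall>a\<in>{1..4}. \<forall>b\<in>{1..4}. \<exists>j\<in>{1..4}. f j \<noteq> f a \<and> f j \<noteq> f b"
  shows "betaI (fibre_weight f) {i \<in> {1..4}. l = f i} < 0"
proof (cases "\<exists>a\<in>{1..4}. l = f a")
  case False
  then have empty: "{i \<in> {1..4}. l = f i} = {}"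
    by auto
  have "0 < sum (fibre_weight f) {1..4}"
    using fibre_weight_bounds by (intro sum_pos) auto
  then show ?thesis
    unfolding empty betaI_def by simp
next
  case True
  then obtain a where a: "a \<in> {1..4}" "l = f a" ..
  then have I: "{i \<in> {1..4}. l = f i} = {j \<in> {1..4}. f j = f a}"
    by auto
  obtain j where j: "j \<in> {1..4}" "f j \<noteq> f a"
    using no_cover a(1) by blast
  obtain j' where j': "j' \<in> {1..4}" "f j' \<noteq> f a" "f j' \<noteq> f j"
    using no_cover a(1) j(1) by blast
  let ?C = "\<lambda>b. {i \<in> {1..4::nat}. f i = f b}"
  have "?C j \<inter> ?C j' = {}"
    using j'(3) by auto
  then have "sum (fibre_weight f) (?C j \<union> ?C j') = sum (fibre_weight f) (?C j) + sum (fibre_weight f) (?C j')"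
    by (intro sum.union_disjoint) auto
  then have "sum (fibre_weight f) (?C j \<union> ?C j') = 1/2"
    using sum_fibre_weight_fibre[OF j(1), of f] sum_fibre_weight_fibre[OF j'(1), of f] by simp
  moreover have "sum (fibre_weight f) (?C j \<union> ?C j') \<le> sum (fibre_weight f) ({1..4} - ?C a)"
    using j j' fibre_weight_bounds by (intro sum_mono2) (auto intro: less_imp_le)
  ultimately show ?thesis
    using sum_fibre_weight_fibre[OF a(1), of f] unfolding I betaI_def by linarith
qed

lemma lines_not_covered_if_balanced:
  assumes m: "m1 = m2" and Q: "QPH z1 m1 m2 F 0" and no_cover: "\<not> subbundles_cover z1 m1 m2 F"
    and "a \<in> {1..4}" "b \<in> {1..4}"
  shows "\<exists>j\<in>{1..4}. F j \<noteq> F a \<and> F j \<noteq> F b"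
proof -
  have deg: "w$i \<noteq> 0 \<Longrightarrow> mdeg m1 m2 i = m1" for w :: "complex^2" and i
    using m by (simp add: mdeg_def)
  obtain va where va: "va \<noteq> 0" "F a = cline va"
    using QPH_lines[OF Q \<open>a \<in> {1..4}\<close>] by blast
  obtain vb where vb: "vb \<noteq> 0" "F b = cline vb"
    using QPH_lines[OF Q \<open>b \<in> {1..4}\<close>] by blast
  have "line_subbundle m1 m2 m1 (const_section va)"
    using line_subbundle_const_section[OF va(1) deg] .
  moreover have "line_subbundle m1 m2 m2 (const_section vb)"
    using line_subbundle_const_section[OF vb(1) deg] m by simp
  ultimately have "IL z1 m1 m2 F m1 (const_section va) \<union> IL z1 m1 m2 F m2 (const_section vb) \<noteq> {1..4}"
    using no_cover unfolding subbundles_cover_def by blast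
  then obtain j where "j \<in> {1..4}" "j \<notin> IL z1 m1 m2 F m1 (const_section va)"
    "j \<notin> IL z1 m1 m2 F m2 (const_section vb)"
    using IL_subset by blast
  moreover have "IL z1 m1 m2 F m1 (const_section va) = {i \<in> {1..4}. cline va = F i}"
    "IL z1 m1 m2 F m2 (const_section vb) = {i \<in> {1..4}. cline vb = F i}"
    using IL_const_section[OF deg] m by simp_all
  ultimately have "j \<in> {1..4}" "cline va \<noteq> F j" "cline vb \<noteq> F j"
    by simp_all
  moreover from this va vb have "F j \<noteq> F a" "F j \<noteq> F b"
    by simp_all
  ultimately show ?thesis
    by blast
qed

lemma stable_fibre_weight_if_balanced:
  assumes m: "m1 = m2"
    and lines_not_covered: "\<forall>a\<in>{1..4}. \<forall>b\<in>{1..4}. \<exists>j\<in>{1..4}. F j \<noteq> F a \<and> F j \<noteq> F b"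
  shows "stable z1 m1 m2 (fibre_weight F) F 0"
  unfolding stable_zero_iff
proof (intro allI impI)
  fix k s assume L: "line_subbundle m1 m2 k s"
  have deg: "w$i \<noteq> 0 \<Longrightarrow> mdeg m1 m2 i = m1" for w :: "complex^2" and i
    using m by (simp add: mdeg_def)
  obtain i where "s$i \<noteq> 0"
    using line_subbundle_nonzero[OF L] by (metis vec_eq_iff zero_index)
  then have "k \<le> m1"
    using line_subbundle_degree_bound[OF L] m by (simp add: mdeg_def)
  show "betaI (fibre_weight F) (IL z1 m1 m2 F k s) < real_of_int (m1 + m2 - 2 * k)"
  proof (cases "k = m1")
    case False
    with \<open>k \<le> m1\<close> m have "2 \<le> real_of_int (m1 + m2 - 2 * k)"
      by linarith
    moreover have "betaI (fibre_weight F) (IL z1 m1 m2 F k s) \<le> 1"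
      using betaI_le_sum[OF beta_ok_fibre_weight IL_subset] sum_fibre_weight_le order_trans
      by blast
    ultimately show ?thesis
      by linarith
  next
    case True
    define w where "w = (\<chi> i. coeff (s$i) 0)"
    have s: "s = const_section w"
      using line_subbundle_balanced_eq_const_section L True m by (simp add: w_def)
    have "IL z1 m1 m2 F k s = {i \<in> {1..4}. cline w = F i}"
      unfolding s True by (rule IL_const_section[OF deg])
    then show ?thesis
      using betaI_fibre_weight_neg[OF lines_not_covered] True m by simp
  qed
qed

text \<open>Lines transversal to \<open>O(m\<^sub>1)\<close> at at most \<open>m\<^sub>1 - m\<^sub>2\<close> marked points lie on a common
  subbundle \<open>(p, 1) : O(m\<^sub>2) \<rightarrow> E\<close>: at the finite points \<open>p\<close> interpolates the slopes, and
  its top coefficient is the slope at infinity.\<close>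

lemma exists_subbundle_through_lines:
  assumes z: "z1 \<noteq> 0" "z1 \<noteq> 1" and J: "J \<subseteq> {1..4}" "int (card J) \<le> m1 - m2"
    and lines: "\<And>i. i \<in> J \<Longrightarrow> \<exists>v. F i = cline v \<and> v$2 \<noteq> 0"
  shows "\<exists>s. line_subbundle m1 m2 m2 s \<and> J \<subseteq> IL z1 m1 m2 F m2 s"
proof -
  define n where "n = nat (m1 - m2)"
  obtain v where v: "\<And>i. i \<in> J \<Longrightarrow> F i = cline (v i) \<and> v i $ 2 \<noteq> 0"
    using lines by metis
  define a where "a i = v i $ 1 / v i $ 2" for i
  define x where "x i = the (pt z1 i)" for i
  have "inj_on x {1, 2, 3}"
    using z by (auto simp: inj_on_def x_def pt_def)
  then have inj: "inj_on x (J - {4})"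
    by (rule inj_on_subset) (use J in auto)
  have "finite (J - {4})"
    using J finite_subset by blast
  then obtain q where q_val: "\<forall>i\<in>J - {4}. poly q (x i) = a i - a 4 * x i ^ n"
    and q_coeff: "\<forall>m\<ge>card (J - {4}). coeff q m = 0"
    using interpolating_poly_exists[OF _ inj, of "\<lambda>i. a i - a 4 * x i ^ n"] by blast
  have "card (J - {4}) \<le> n"
    using J card_Diff1_le[of J 4] finite_subset by (fastforce simp: n_def)
  then have q_top: "coeff q m = 0" if "n \<le> m" for m
    using q_coeff that by simp
  define p where "p = monom (a 4) n + q"
  have "degree p \<le> n"
    by (rule degree_le) (simp add: p_def coeff_monom q_top)
  define s :: "complex poly^2" where "s = (\<chi> i. if i = 1 then p else 1)"
  have s2: "sub_vec m1 m2 m2 s y $ 2 = 1" for y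
    by (cases y) (simp_all add: s_def icoeff_def)
  have L: "line_subbundle m1 m2 m2 s"
    unfolding line_subbundle_def
  proof (intro conjI allI)
    fix i :: 2
    show "deg_le (s$i) (mdeg m1 m2 i - m2)"
      using exhaust_2[of i] \<open>degree p \<le> n\<close> J
      by (auto simp: s_def deg_le_def n_def)
  next
    fix y
    show "sub_vec m1 m2 m2 s y \<noteq> 0"
      using s2[of y] by auto
  qed
  have "i \<in> IL z1 m1 m2 F m2 s" if i: "i \<in> J" for i
  proof -
    let ?w = "sub_vec m1 m2 m2 s (pt z1 i)"
    have "?w $ 1 = a i"
    proof (cases "i = 4")
      case True
      then show ?thesis
        using J by (simp add: pt_def s_def icoeff_def p_def q_top n_def)
    next
      case False
      with i J have "pt z1 i = Some (x i)"
        by (auto simp: pt_def x_def)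
      with i False show ?thesis
        by (simp add: s_def p_def poly_monom q_val)
    qed
    moreover have "?w \<noteq> 0"
      using s2[of "pt z1 i"] by auto
    moreover have "v i \<noteq> 0"
      using v[OF i] by auto
    ultimately have "cline ?w = cline (v i)"
      using v[OF i] by (simp add: cline_eq_iff s2 a_def)
    with v[OF i] J i show ?thesis
      by (auto simp: IL_def sub_fibre_def)
  qed
  with L show ?thesis
    by blast
qed

definition top_summand_points :: "(nat \<Rightarrow> (complex^2) set) \<Rightarrow> nat set" where
  "top_summand_points F = {i \<in> {1..4}. cline (axis 1 1) = F i}"

lemma top_summand_points_subset: "top_summand_points F \<subseteq> {1..4}"
  by (auto simp: top_summand_points_def)

lemma top_summand_subbundle:
  "line_subbundle m1 m2 m1 (const_section (axis 1 1))"
  "IL z1 m1 m2 F m1 (const_section (axis 1 1)) = top_summand_points F"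
proof -
  have deg: "axis 1 (1::complex) $ i \<noteq> 0 \<Longrightarrow> mdeg m1 m2 i = m1" for i
    by (simp add: axis_def split: if_splits)
  show "line_subbundle m1 m2 m1 (const_section (axis 1 1))"
    by (rule line_subbundle_const_section[OF _ deg]) (simp add: axis_eq_0_iff)
  show "IL z1 m1 m2 F m1 (const_section (axis 1 1)) = top_summand_points F"
    unfolding top_summand_points_def by (rule IL_const_section[OF deg])
qed

lemma IL_eq_top_summand_points:
  assumes "line_subbundle m1 m2 k s" "s$2 = 0"
  shows "IL z1 m1 m2 F k s = top_summand_points F"
proof -
  have "sub_vec m1 m2 k s y $ 2 = 0" for y
    using assms(2) by (cases y) (simp_all add: icoeff_def)
  then have "sub_fibre z1 m1 m2 k s i = cline (axis 1 1)" for i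
    using assms(1) cline_eq_cline_axis_iff unfolding sub_fibre_def line_subbundle_def by blast
  then show ?thesis
    by (simp add: IL_def top_summand_points_def)
qed

lemma IL_disjoint_top_summand_points:
  assumes L: "line_subbundle m1 m2 m2 s" and "s$2 \<noteq> 0"
  shows "IL z1 m1 m2 F m2 s \<inter> top_summand_points F = {}"
proof -
  have "deg_le (s$2) 0"
    using L unfolding line_subbundle_def by (metis mdeg_simps(2) diff_self)
  then obtain c where "s$2 = [:c:]"
    using const_if_deg_le_0 by blast
  with \<open>s$2 \<noteq> 0\<close> have "sub_vec m1 m2 m2 s y $ 2 \<noteq> 0" for y
    by (cases y) (simp_all add: icoeff_def)
  then have "sub_fibre z1 m1 m2 m2 s i \<noteq> cline (axis 1 1)" for i
    using L cline_eq_cline_axis_iff unfolding sub_fibre_def line_subbundle_def by blast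
  then show ?thesis
    by (auto simp: IL_def top_summand_points_def)
qed

lemma transversal_points_not_covered:
  assumes no_cover: "\<not> subbundles_cover z1 m1 m2 F" and L: "line_subbundle m1 m2 m2 s"
  shows "\<not> {1..4} - top_summand_points F \<subseteq> IL z1 m1 m2 F m2 s"
proof
  assume "{1..4} - top_summand_points F \<subseteq> IL z1 m1 m2 F m2 s"
  then have "IL z1 m1 m2 F m1 (const_section (axis 1 1)) \<union> IL z1 m1 m2 F m2 s = {1..4}"
    using IL_subset[of z1 m1 m2 F m2 s] top_summand_points_subset[of F] top_summand_subbundle(2)
    by blast
  with L no_cover show False
    unfolding subbundles_cover_def using top_summand_subbundle(1) by blast
qed

lemma card_transversal_points_gt:
  assumes z: "z1 \<noteq> 0" "z1 \<noteq> 1" and Q: "QPH z1 m1 m2 F 0" and no_cover: "\<not> subbundles_cover z1 m1 m2 F"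
  shows "m1 - m2 < int (card ({1..4} - top_summand_points F))"
proof (rule ccontr)
  let ?J = "{1..4} - top_summand_points F"
  have lines: "\<exists>v. F i = cline v \<and> v$2 \<noteq> 0" if "i \<in> ?J" for i
  proof -
    have "i \<in> {1..4}"
      using that by simp
    then obtain v where v: "v \<noteq> 0" "F i = cline v"
      using QPH_lines[OF Q] by blast
    moreover have "cline (axis 1 1) \<noteq> F i"
      using that by (simp add: top_summand_points_def)
    ultimately have "cline v \<noteq> cline (axis 1 1)"
      by blast
    then have "v$2 \<noteq> 0"
      using cline_eq_cline_axis_iff[OF v(1)] by blast
    with v show ?thesis
      by blast
  qed
  assume "\<not> m1 - m2 < int (card ?J)"
  then have "\<exists>s. line_subbundle m1 m2 m2 s \<and> ?J \<subseteq> IL z1 m1 m2 F m2 s"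
    using exists_subbundle_through_lines[of z1 ?J m1 m2 F, OF z _ _ lines] by simp
  then show False
    using transversal_points_not_covered[OF no_cover] by blast
qed

text \<open>For \<open>m\<^sub>1 > m\<^sub>2\<close> put no weight at the points where the flag is the fibre of \<open>O(m\<^sub>1)\<close>,
  and equal weights \<open>t\<close> with total \<open>m\<^sub>1 - m\<^sub>2 + 1/2\<close> at the others. Subbundles of degree
  below \<open>m\<^sub>2\<close> are then harmless, the summand \<open>O(m\<^sub>1)\<close> has \<open>\<beta>\<^sub>I = -(m\<^sub>1 - m\<^sub>2 + 1/2)\<close>, and a
  subbundle of degree \<open>m\<^sub>2\<close> misses at least one transversal point, which costs \<open>2t > 1/2\<close>.\<close>

lemma stable_transversal_weight:
  assumes "m2 < m1" and no_cover: "\<not> subbundles_cover z1 m1 m2 F"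
    and t: "1/4 < t" "t < 1"
    and tn: "t * real (card ({1..4} - top_summand_points F)) = real_of_int (m1 - m2) + 1/2"
  defines "\<beta> \<equiv> \<lambda>i. if i \<in> top_summand_points F then 0 else t"
  shows "stable z1 m1 m2 \<beta> F 0"
  unfolding stable_zero_iff
proof (intro allI impI)
  fix k s assume L: "line_subbundle m1 m2 k s"
  let ?I = "IL z1 m1 m2 F k s" and ?I1 = "top_summand_points F"
  have sum_\<beta>: "sum \<beta> A = t * real (card (A - ?I1))" if "A \<subseteq> {1..4}" for A
  proof -
    have "finite A"
      using that finite_subset by blast
    then have "sum \<beta> A = sum (\<lambda>_. t) (A - ?I1)"
      by (simp add: \<beta>_def sum.If_cases Diff_eq)
    then show ?thesis
      by simp
  qed
  have total: "sum \<beta> {1..4} = real_of_int (m1 - m2) + 1/2"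
    using sum_\<beta>[of "{1..4}"] tn by simp
  have ok: "beta_ok \<beta>"
    using t by (simp add: beta_ok_def \<beta>_def)
  show "betaI \<beta> ?I < real_of_int (m1 + m2 - 2 * k)"
  proof (cases "s$2 = 0")
    case True
    then have "s$1 \<noteq> 0"
      using line_subbundle_nonzero[OF L] by (auto simp: vec2_eq_iff)
    then have "k \<le> m1"
      using line_subbundle_degree_bound[OF L, of 1] by simp
    moreover have "betaI \<beta> ?I = - (real_of_int (m1 - m2) + 1/2)"
      unfolding IL_eq_top_summand_points[OF L True]
      using betaI_eq[OF top_summand_points_subset, of \<beta>] sum_\<beta>[OF top_summand_points_subset] total
      by simp
    ultimately show ?thesis
      by simp
  next
    case False
    then have "k \<le> m2"
      using line_subbundle_degree_bound[OF L, of 2] by simp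
    show ?thesis
    proof (cases "k = m2")
      case False
      with \<open>k \<le> m2\<close> have "real_of_int (m1 - m2) + 2 \<le> real_of_int (m1 + m2 - 2 * k)"
        by simp
      with betaI_le_sum[OF ok IL_subset[of z1 m1 m2 F k s]] total show ?thesis
        by linarith
    next
      case True
      have disjoint: "?I - ?I1 = ?I"
        using IL_disjoint_top_summand_points[OF _ \<open>s$2 \<noteq> 0\<close>] L True by blast
      then have "?I \<subset> {1..4} - ?I1"
        using IL_subset[of z1 m1 m2 F k s] transversal_points_not_covered[OF no_cover] L True
        by blast
      then have "card ?I < card ({1..4} - ?I1)"
        by (simp add: psubset_card_mono)
      then have "t * real (card ?I) \<le> t * (real (card ({1..4} - ?I1)) - 1)"
        using t by (intro mult_left_mono) auto
      moreover have "betaI \<beta> ?I = 2 * (t * real (card ?I)) - (real_of_int (m1 - m2) + 1/2)"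
        using betaI_eq[OF IL_subset, of \<beta>] sum_\<beta>[OF IL_subset] total disjoint by simp
      ultimately have "betaI \<beta> ?I \<le> real_of_int (m1 - m2) + 1/2 - 2 * t"
        using tn by (simp add: algebra_simps)
      with t True show ?thesis
        by simp
    qed
  qed
qed

lemma exists_stable_weight_unbalanced:
  assumes z: "z1 \<noteq> 0" "z1 \<noteq> 1" and "m2 < m1" and Q: "QPH z1 m1 m2 F 0"
    and no_cover: "\<not> subbundles_cover z1 m1 m2 F"
  shows "\<exists>\<beta>. beta_ok \<beta> \<and> stable z1 m1 m2 \<beta> F 0"
proof -
  let ?n = "real (card ({1..4} - top_summand_points F))"
  define t where "t = (real_of_int (m1 - m2) + 1/2) / ?n"
  have "card ({1..4} - top_summand_points F) \<le> 4"
    by (rule card_diff_one_to_four_le)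
  with card_transversal_points_gt[OF z Q no_cover] \<open>m2 < m1\<close>
  have n: "real_of_int (m1 - m2) + 1 \<le> ?n" "?n \<le> 4" "1 \<le> real_of_int (m1 - m2)"
    by linarith+
  then have "?n \<noteq> 0"
    by linarith
  then have tn: "t * ?n = real_of_int (m1 - m2) + 1/2"
    by (simp add: t_def)
  have "real_of_int (m1 - m2) + 1/2 < 1 * ?n" "1/4 * ?n < real_of_int (m1 - m2) + 1/2"
    using n by linarith+
  then have t: "1/4 < t" "t < 1"
    unfolding tn [symmetric] using n by (simp_all add: mult_less_cancel_right)
  then have "beta_ok (\<lambda>i. if i \<in> top_summand_points F then 0 else t)"
    by (simp add: beta_ok_def)
  with stable_transversal_weight[OF \<open>m2 < m1\<close> no_cover t tn] show ?thesis
    by blast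
qed

theorem lemma6p3:
  fixes z1 :: complex and m1 m2 :: int
  assumes "z1 \<noteq> 0" and "z1 \<noteq> 1" and "m2 \<le> m1"
  shows
   "(\<forall>F A. QPH z1 m1 m2 F A \<and> A \<noteq> 0 \<and> det A = 0 \<longrightarrow>
       (\<forall>k s. line_subbundle m1 m2 k s \<and> A *v s = 0 \<longrightarrow>
          ((\<forall>\<beta>. beta_ok \<beta> \<longrightarrow> \<not> stable z1 m1 m2 \<beta> F A) \<longleftrightarrow>
           - real (card ({1..4} - IL z1 m1 m2 F k s)) \<ge> real_of_int (m1 + m2 - 2 * k))))
    \<and> (\<forall>F. QPH z1 m1 m2 F 0 \<longrightarrow>
       ((\<forall>\<beta>. beta_ok \<beta> \<longrightarrow> \<not> stable z1 m1 m2 \<beta> F 0) \<longleftrightarrow>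
        (\<exists>s s'. line_subbundle m1 m2 m1 s \<and> line_subbundle m1 m2 m2 s' \<and>
           IL z1 m1 m2 F m1 s \<union> IL z1 m1 m2 F m2 s' = {1..4})))"
proof (intro conjI allI impI)
  fix F A k s
  assume "QPH z1 m1 m2 F A \<and> A \<noteq> 0 \<and> det A = 0" "line_subbundle m1 m2 k s \<and> A *v s = 0"
  then have "stable z1 m1 m2 \<beta> F A \<longleftrightarrow> betaI \<beta> (IL z1 m1 m2 F k s) < real_of_int (m1 + m2 - 2 * k)"
    for \<beta>
    using stable_iff_kernel_subbundle[OF assms(1,2)] by blast
  then show "(\<forall>\<beta>. beta_ok \<beta> \<longrightarrow> \<not> stable z1 m1 m2 \<beta> F A) \<longleftrightarrow>
      - real (card ({1..4} - IL z1 m1 m2 F k s)) \<ge> real_of_int (m1 + m2 - 2 * k)"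
    using ex_betaI_less_iff[OF IL_subset] by (meson not_less)
next
  fix F assume Q: "QPH z1 m1 m2 F 0"
  have "\<exists>\<beta>. beta_ok \<beta> \<and> stable z1 m1 m2 \<beta> F 0" if no_cover: "\<not> subbundles_cover z1 m1 m2 F"
  proof (cases "m1 = m2")
    case True
    then show ?thesis
      using stable_fibre_weight_if_balanced lines_not_covered_if_balanced[OF True Q no_cover]
        beta_ok_fibre_weight by blast
  next
    case False
    then show ?thesis
      using exists_stable_weight_unbalanced[OF assms(1,2) _ Q no_cover] assms(3) by simp
  qed
  then have "(\<forall>\<beta>. beta_ok \<beta> \<longrightarrow> \<not> stable z1 m1 m2 \<beta> F 0) \<longleftrightarrow> subbundles_cover z1 m1 m2 F"
    using not_stable_if_subbundles_cover by blast
  then show "(\<forall>\<beta>. beta_ok \<beta> \<longrightarrow> \<not> stable z1 m1 m2 \<beta> F 0) \<longleftrightarrow>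
      (\<exists>s s'. line_subbundle m1 m2 m1 s \<and> line_subbundle m1 m2 m2 s' \<and>
         IL z1 m1 m2 F m1 s \<union> IL z1 m1 m2 F m2 s' = {1..4})"
    unfolding subbundles_cover_def .
qed

end
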